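(* Let $d\geq 3$ and let $n$ be an integer with $n\not\equiv -1\pmod d$. (a) If $0\neq W\subset A^n$ is an additive subgroup stable under $\Gamma_n(d)$, then $W\supseteq\lambda A^n$ for some non-zero $\lambda\in A$; in particular $W$ has finite index in $A^n$. (b) If $F\supseteq A$ is a field and $W_F\subseteq F^n$ is a non-zero $F$-subspace stable under $\rho_n(d)(B_{n+1})$, then $W_F=F^n$.
   Context: $A=\mathbb{Z}[q,q^{-1}]/(\Phi_d(q))$, where $\Phi_d$ is the $d$-th cyclotomic polynomial. $\rho_n(d):B_{n+1}\to GL_n(A)$ is the reduced Burau representation reduced mod $\Phi_d(q)$. It sends the generator $s_j$ to $T_j$, where $T_j(e_j)=-qe_j$, $T_j(e_{j-1})=e_{j-1}+qe_j$, $T_j(e_{j+1})=e_{j+1}+e_j$, and $T_j(e_k)=e_k$ for $|k-j|\geq 2$, with $e_1,\dots,e_n$ the standard basis. $\Gamma_n(d)$ denotes the image of $\rho_n(d)$. *)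

theory Defs
  imports Complex_Main "HOL-Library.Cardinality" "HOL-Library.Function_Algebras" "HOL-Computational_Algebra.Polynomial" "HOL-Number_Theory.Cong"
begin

definition cyclotomic_C :: "nat \<Rightarrow> complex poly" where
  "cyclotomic_C d = (\<Prod>k\<in>{k\<in>{1..d}. coprime k d}. [:- cis (2 * pi * real k / real d), 1:])"

text \<open>The d-th cyclotomic polynomial as an integer polynomial (it has integer coefficients).\<close>
definition cyclotomic :: "nat \<Rightarrow> int poly" where
  "cyclotomic d = (THE p :: int poly. map_poly of_int p = cyclotomic_C d)"

text \<open>The parameter d is encoded as the cardinality of the (phantom) index type 'd.
  Since q is a unit modulo Phi_d (Phi_d divides q^d - 1), Z[q,q^-1]/(Phi_d) = Z[q]/(Phi_d).\<close>
definition cyc_rel :: "'d itself \<Rightarrow> int poly \<Rightarrow> int poly \<Rightarrow> bool" where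
  "cyc_rel _ p r \<longleftrightarrow> cyclotomic CARD('d) dvd (p - r)"

lemma cyc_rel_equivp: "equivp (cyc_rel TYPE('d))"
proof (rule equivpI)
  show "reflp (cyc_rel TYPE('d))" by (rule reflpI) (simp add: cyc_rel_def)
  show "symp (cyc_rel TYPE('d))"
    by (rule sympI) (metis cyc_rel_def dvd_minus_iff minus_diff_eq)
  show "transp (cyc_rel TYPE('d))"
    proof (rule transpI)
    fix x y z assume "cyc_rel TYPE('d) x y" "cyc_rel TYPE('d) y z"
    then have "cyclotomic CARD('d) dvd (x - y) + (y - z)" unfolding cyc_rel_def by (rule dvd_add)
    then show "cyc_rel TYPE('d) x z" unfolding cyc_rel_def by simp
  qed
qed

quotient_type 'd cyc = "int poly" / "cyc_rel TYPE('d)"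
  by (rule cyc_rel_equivp)

instantiation cyc :: (type) "{comm_ring, comm_monoid_mult}"
begin

lift_definition zero_cyc :: "'d cyc" is "0 :: int poly" .
lift_definition one_cyc :: "'d cyc" is "1 :: int poly" .
lift_definition plus_cyc :: "'d cyc \<Rightarrow> 'd cyc \<Rightarrow> 'd cyc" is "(+)"
  unfolding cyc_rel_def by (simp add: add_diff_add dvd_add)
lift_definition uminus_cyc :: "'d cyc \<Rightarrow> 'd cyc" is uminus
  unfolding cyc_rel_def by (metis dvd_minus_iff minus_diff_eq minus_diff_minus)
lift_definition minus_cyc :: "'d cyc \<Rightarrow> 'd cyc \<Rightarrow> 'd cyc" is "(-)"
  unfolding cyc_rel_def
proof -
  fix p1 p2 r1 r2 :: "int poly"
  assume "cyclotomic CARD('d) dvd p1 - p2" "cyclotomic CARD('d) dvd r1 - r2"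
  then have "cyclotomic CARD('d) dvd (p1 - p2) - (r1 - r2)" by (rule dvd_diff)
  then show "cyclotomic CARD('d) dvd (p1 - r1) - (p2 - r2)" by (simp add: algebra_simps)
qed
lift_definition times_cyc :: "'d cyc \<Rightarrow> 'd cyc \<Rightarrow> 'd cyc" is "(*)"
proof -
  fix p1 p2 r1 r2 :: "int poly"
  assume "cyc_rel TYPE('d) p1 p2" "cyc_rel TYPE('d) r1 r2"
  then have "cyclotomic CARD('d) dvd (p1 - p2) * r1 + p2 * (r1 - r2)"
    unfolding cyc_rel_def by (intro dvd_add dvd_mult2 dvd_mult)
  moreover have "(p1 - p2) * r1 + p2 * (r1 - r2) = p1 * r1 - p2 * r2"
    by (simp add: algebra_simps)
  ultimately show "cyc_rel TYPE('d) (p1 * r1) (p2 * r2)"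
    unfolding cyc_rel_def by simp
qed

instance
  by standard (transfer; simp add: cyc_rel_def algebra_simps)+

end

text \<open>Note: we do not instantiate comm_ring_1, since 0 ~= 1 fails for degenerate
  index types (e.g. CARD('d) = 0); all ring axioms other than 0 ~= 1 hold.\<close>

lift_definition cyc_q :: "'d cyc" is "[:0, 1:] :: int poly" .

text \<open>R^n is modelled as functions nat => R supported on the index set {1..n}
  (coordinates with respect to the standard basis e_1,...,e_n).\<close>
definition vecs :: "nat \<Rightarrow> (nat \<Rightarrow> 'a::zero) set" where
  "vecs n = {v. \<forall>k. k \<notin> {1..n} \<longrightarrow> v k = 0}"

text \<open>The matrix T_j (parameter q) acting on coordinate vectors:
  T_j(e_j) = -q e_j, T_j(e_(j-1)) = e_(j-1) + q e_j, T_j(e_(j+1)) = e_(j+1) + e_j,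
  T_j(e_k) = e_k otherwise.  Hence only the j-th coordinate changes, and
  (T_j v)_j = -q v_j + q v_(j-1) + v_(j+1) (with v_0 = v_(n+1) = 0 for v in vecs n).\<close>
definition burau_T :: "'a::comm_ring \<Rightarrow> nat \<Rightarrow> (nat \<Rightarrow> 'a) \<Rightarrow> (nat \<Rightarrow> 'a)" where
  "burau_T q j v = (\<lambda>k. if k = j then - q * v j + q * v (j - 1) + v (j + 1) else v k)"

text \<open>The image of B_(n+1) under the representation s_j |-> T_j (j = 1..n):
  the group of (bijective) maps of vecs n generated by the T_j, i.e. all finite
  products of the T_j and their inverses.\<close>
inductive_set burau_image :: "'a::comm_ring \<Rightarrow> nat \<Rightarrow> ((nat \<Rightarrow> 'a) \<Rightarrow> (nat \<Rightarrow> 'a)) set"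
  for q :: 'a and n :: nat where
  id: "id \<in> burau_image q n"
| gen: "g \<in> burau_image q n \<Longrightarrow> j \<in> {1..n} \<Longrightarrow> burau_T q j \<circ> g \<in> burau_image q n"
| gen_inv: "g \<in> burau_image q n \<Longrightarrow> j \<in> {1..n} \<Longrightarrow>
     inv_into (vecs n) (burau_T q j) \<circ> g \<in> burau_image q n"

definition stable :: "((nat \<Rightarrow> 'a) \<Rightarrow> (nat \<Rightarrow> 'a)) set \<Rightarrow> (nat \<Rightarrow> 'a) set \<Rightarrow> bool" where
  "stable G W \<longleftrightarrow> (\<forall>g\<in>G. \<forall>w\<in>W. g w \<in> W)"

definition add_subgroup :: "nat \<Rightarrow> (nat \<Rightarrow> 'a::ab_group_add) set \<Rightarrow> bool" where
  "add_subgroup n W \<longleftrightarrow> W \<subseteq> vecs n \<and> 0 \<in> W \<and> (\<forall>v\<in>W. \<forall>w\<in>W. v + w \<in> W) \<and> (\<forall>v\<in>W. - v \<in> W)"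

definition subspace_vecs :: "nat \<Rightarrow> (nat \<Rightarrow> 'a::field) set \<Rightarrow> bool" where
  "subspace_vecs n W \<longleftrightarrow> W \<subseteq> vecs n \<and> 0 \<in> W \<and> (\<forall>v\<in>W. \<forall>w\<in>W. v + w \<in> W) \<and>
     (\<forall>c. \<forall>v\<in>W. (\<lambda>k. c * v k) \<in> W)"

end

theory Submission
  imports Defs "HOL-Computational_Algebra.Polynomial_Factorial" "HOL-Library.FuncSet"
begin

(* Let A = Z[q]/(Phi_d) and let W be a non-zero subset of A^n (or F^n) closed under addition,
   negation and the Burau matrices T_j.  Each T_j changes only the j-th coordinate, so T_j w - w
   is a coordinate vector; if all of these vanish, w is fixed and a telescoping sum shows
   (q^(n+1) - 1) w_1 = 0.  Since d does not divide n + 1 and A is a domain, w = 0.  Otherwise W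
   contains c e_j with c ~= 0, and as q has finite order the T_j move it to every c e_k.  Over A
   this yields c A^n in W (A is generated by q), and a non-zero c divides a positive integer N
   with A/NA finite, so W has finite index; over a field it yields all of F^n. *)

abbreviation ip :: "int poly \<Rightarrow> complex poly" where "ip \<equiv> map_poly of_int"

lemma ip_add [simp]: "ip (p + q) = ip p + ip q"
  by (intro poly_eqI) (simp_all add: coeff_map_poly)
lemma ip_diff [simp]: "ip (p - q) = ip p - ip q"
  by (intro poly_eqI) (simp_all add: coeff_map_poly)
lemma ip_uminus [simp]: "ip (- p) = - ip p"
  by (intro poly_eqI) (simp_all add: coeff_map_poly)
lemma ip_mult [simp]: "ip (p * q) = ip p * ip q"
  by (intro poly_eqI) (simp_all add: coeff_map_poly coeff_mult)
lemma ip_prod [simp]: "ip (prod f A) = (\<Prod>x\<in>A. ip (f x))"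
  by (induction A rule: infinite_finite_induct) simp_all
lemma ip_monom [simp]: "ip (monom c n) = monom (of_int c) n"
  by (simp add: map_poly_monom)
lemma ip_smult [simp]: "ip (smult c p) = smult (of_int c) (ip p)"
  by (simp add: map_poly_smult)
lemma ip_pcompose [simp]: "ip (pcompose p q) = pcompose (ip p) (ip q)"
  by (induction p) (simp_all add: pcompose_pCons map_poly_pCons)
lemma ip_eq_iff [simp]: "ip p = ip q \<longleftrightarrow> p = q"
  by (auto simp: poly_eq_iff coeff_map_poly)
lemma ip_eq_0_iff [simp]: "ip p = 0 \<longleftrightarrow> p = 0"
  using ip_eq_iff[of p 0] by (simp del: ip_eq_iff)
lemma degree_ip [simp]: "degree (ip p) = degree p"
  by (rule degree_map_poly) simp
lemma lead_coeff_ip [simp]: "lead_coeff (ip p) = of_int (lead_coeff p)"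
  by (simp add: coeff_map_poly)

definition zeta :: "nat \<Rightarrow> nat \<Rightarrow> complex" where
  "zeta d k = cis (2 * pi * real k / real d)"

lemma zeta_pow: "zeta d k ^ m = zeta d (k * m)"
  unfolding zeta_def DeMoivre by (simp add: algebra_simps)

lemma zeta_mod:
  assumes "d > 0"
  shows "zeta d k = zeta d (k mod d)"
proof -
  have "real k = real (k div d) * real d + real (k mod d)"
    by (metis div_mult_mod_eq of_nat_add of_nat_mult)
  then have "2 * pi * real k / real d = 2 * pi * real (k div d) + 2 * pi * real (k mod d) / real d"
    using assms by (simp add: field_simps)
  then have "zeta d k = cis (2 * pi * real (k div d)) * zeta d (k mod d)"
    unfolding zeta_def by (simp only: cis_mult)
  also have "cis (2 * pi * real (k div d)) = 1"
    by (rule cis_multiple_2pi) (simp add: Ints_of_nat)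
  finally show ?thesis by simp
qed

lemma zeta_eq_iff:
  assumes "d > 0"
  shows "zeta d k = zeta d l \<longleftrightarrow> k mod d = l mod d"
proof
  assume "zeta d k = zeta d l"
  then have "zeta d (k mod d) = zeta d (l mod d)" using zeta_mod[OF assms] by metis
  moreover have "inj_on (\<lambda>k. cis (2 * pi * real k / real d)) {..<d}"
    using bij_betw_roots_unity[OF assms] by (simp add: bij_betw_def)
  ultimately show "k mod d = l mod d"
    unfolding zeta_def inj_on_def using assms by auto
qed (metis zeta_mod[OF assms])

lemma zeta_eq_1_iff:
  assumes "d > 0"
  shows "zeta d k = 1 \<longleftrightarrow> d dvd k"
  using zeta_eq_iff[OF assms, of k 0] by (simp add: zeta_def dvd_eq_mod_eq_0)

lemma zeta_scale: "m > 0 \<Longrightarrow> zeta (e * m) (j * m) = zeta e j"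
  unfolding zeta_def by (simp add: field_simps)

lemma zeta_inj:
  assumes "d > 0"
  shows "inj_on (zeta d) {1..d}"
proof (rule inj_onI)
  fix k l assume kl: "k \<in> {1..d}" "l \<in> {1..d}" "zeta d k = zeta d l"
  then have "k mod d = l mod d" using zeta_eq_iff[OF assms] by blast
  then show "k = l" using kl
    by (metis atLeastAtMost_iff le_neq_implies_less mod_less mod_self nat_neq_iff
        not_one_le_zero)
qed


lemma prod_roots_dvd:
  fixes p :: "'a::idom poly"
  assumes "finite S" "\<forall>a\<in>S. poly p a = 0"
  shows "(\<Prod>a\<in>S. [:-a, 1:]) dvd p"
  using assms
proof (induction S arbitrary: p rule: finite_induct)
  case (insert a S)
  then obtain p1 where p1: "p = [:-a, 1:] * p1"
    by (metis dvdE insert_iff poly_eq_0_iff_dvd)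
  have "\<forall>b\<in>S. poly p1 b = 0" using insert p1 by auto
  then have "(\<Prod>a\<in>S. [:-a, 1:]) dvd p1" using insert.IH by blast
  then have "[:-a, 1:] * (\<Prod>a\<in>S. [:-a, 1:]) dvd [:-a, 1:] * p1"
    by (rule mult_dvd_mono[OF dvd_refl])
  then show ?case using p1 insert.hyps by simp
qed simp

lemma lead_coeff_lin_prod [simp]: "lead_coeff (\<Prod>a\<in>S. [:-f a, 1::'a::idom:]) = 1"
  by (simp add: lead_coeff_prod)

lemma degree_lin_prod: "finite S \<Longrightarrow> degree (\<Prod>a\<in>S. [:-f a, 1::'a::idom:]) = card S"
  by (subst degree_prod_eq_sum_degree) auto

lemma monic_dvd_eq:
  fixes p q :: "'a::idom poly"
  assumes "p dvd q" "lead_coeff p = 1" "lead_coeff q = 1" "degree p = degree q"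
  shows "p = q"
proof -
  obtain r where r: "q = p * r" using assms(1) by (rule dvdE)
  have "p \<noteq> 0" "r \<noteq> 0" using r assms(3) by auto
  then have "degree r = 0" using r assms(4) degree_mult_eq by fastforce
  then obtain c where c: "r = [:c:]" by (metis degree_eq_zeroE)
  have "lead_coeff q = lead_coeff p * c" using r c by (simp add: lead_coeff_mult)
  then have "c = 1" using assms by simp
  then show ?thesis using r c by simp
qed


definition Xm1 :: "nat \<Rightarrow> 'a::comm_ring_1 poly" where "Xm1 d = monom 1 d - 1"

lemma ip_Xm1 [simp]: "ip (Xm1 d) = Xm1 d"
  by (simp add: Xm1_def)

lemma poly_Xm1 [simp]: "poly (Xm1 d) x = x ^ d - 1"
  by (simp add: Xm1_def poly_monom)

lemma degree_Xm1:
  assumes "d > 0"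
  shows "degree (Xm1 d :: 'a::{comm_ring_1,ring_char_0} poly) = d"
proof -
  have "degree (monom (1::'a) d + (- 1)) = degree (monom (1::'a) d)"
    by (rule degree_add_eq_left) (use assms in \<open>simp add: degree_monom_eq\<close>)
  then show ?thesis unfolding Xm1_def by (simp add: degree_monom_eq)
qed

lemma lead_coeff_Xm1:
  assumes "d > 0"
  shows "lead_coeff (Xm1 d :: 'a::{comm_ring_1,ring_char_0} poly) = 1"
  using assms by (simp add: degree_Xm1) (simp add: Xm1_def coeff_monom)

lemma Xm1_roots_prod:
  assumes "d > 0"
  shows "Xm1 d = (\<Prod>k\<in>{1..d}. [:- zeta d k, 1:])"
proof -
  let ?R = "zeta d ` {1..d}"
  have eq: "(\<Prod>k\<in>{1..d}. [:- zeta d k, 1:]) = (\<Prod>a\<in>?R. [:- a, 1:])"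
    using prod.reindex[OF zeta_inj[OF assms], of "\<lambda>a. [:- a, 1:]"] by simp
  have "(\<Prod>a\<in>?R. [:- a, 1:]) dvd Xm1 d"
    by (rule prod_roots_dvd) (use assms in \<open>auto simp: zeta_pow zeta_eq_1_iff\<close>)
  moreover have "degree (\<Prod>a\<in>?R. [:- a, 1:]) = d"
    using degree_lin_prod[of ?R "\<lambda>a. a"] card_image[OF zeta_inj[OF assms]] by simp
  moreover have "lead_coeff (\<Prod>a\<in>?R. [:- a, 1:]) = 1"
    using lead_coeff_lin_prod[of "\<lambda>a. a"] by simp
  moreover have "lead_coeff (Xm1 d :: complex poly) = 1" "degree (Xm1 d :: complex poly) = d"
    using assms by (rule lead_coeff_Xm1, rule degree_Xm1)
  ultimately show ?thesis unfolding eq by (metis monic_dvd_eq)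
qed

lemma cyclotomic_C_zeta: "cyclotomic_C d = (\<Prod>k\<in>{k\<in>{1..d}. coprime k d}. [:- zeta d k, 1:])"
  unfolding cyclotomic_C_def zeta_def ..

lemma lead_coeff_cyclotomic_C [simp]: "lead_coeff (cyclotomic_C d) = 1"
  unfolding cyclotomic_C_zeta by (rule lead_coeff_lin_prod)

text \<open>The roots zeta d k whose order is exactly e (a divisor of d) are the primitive e-th roots
  of unity: k = j * (d div e) with j coprime to e.\<close>

lemma exponents_of_order:
  fixes d e :: nat
  assumes "e dvd d" "d > 0"
  shows "bij_betw (\<lambda>j. j * (d div e)) {j\<in>{1..e}. coprime j e} {k\<in>{1..d}. d div gcd k d = e}"
proof -
  obtain m where dm: "d = e * m" using assms(1) by blast
  then have e0: "e > 0" and m0: "m > 0" using assms(2) by auto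
  have dme: "d div e = m" using dm e0 by simp
  show ?thesis unfolding dme
  proof (rule bij_betw_imageI)
    show "inj_on (\<lambda>j. j * m) {j \<in> {1..e}. coprime j e}"
      using m0 by (auto simp: inj_on_def)
    show "(\<lambda>j. j * m) ` {j \<in> {1..e}. coprime j e} = {k \<in> {1..d}. d div gcd k d = e}"
    proof (intro equalityI subsetI)
      fix x assume "x \<in> (\<lambda>j. j * m) ` {j \<in> {1..e}. coprime j e}"
      then obtain j where j: "j \<in> {1..e}" "coprime j e" and xj: "x = j * m" by blast
      have "j * m \<in> {1..d}" using j m0 dm by auto
      moreover have "gcd (j * m) d = m * gcd j e"
        unfolding dm by (metis gcd_mult_distrib_nat mult.commute)
      then have "d div gcd (j * m) d = e" using j m0 dm by simp
      ultimately show "x \<in> {k \<in> {1..d}. d div gcd k d = e}" using xj by blast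
    next
      fix k assume "k \<in> {k \<in> {1..d}. d div gcd k d = e}"
      then have k: "k \<in> {1..d}" "d div gcd k d = e" by auto
      define g where "g = gcd k d"
      have g0: "g > 0" using k by (simp add: g_def)
      have dg: "d = e * g" using k unfolding g_def by (metis dvd_div_mult_self gcd_dvd2)
      then have gm: "g = m" using dm e0 by simp
      obtain j where kj: "k = g * j" unfolding g_def by (metis dvdE gcd_dvd1)
      have "gcd (g * j) (g * e) = g * gcd j e" by (rule gcd_mult_distrib_nat[symmetric])
      moreover have "gcd (g * j) (g * e) = g" using g_def kj dg by (simp add: mult.commute)
      ultimately have "g * gcd j e = g * 1" by (metis mult_1_right)
      then have "gcd j e = 1" using mult_left_cancel[of g "gcd j e" 1] g0 by linarith
      then have "coprime j e" by (simp add: coprime_iff_gcd_eq_1)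
      moreover have "j \<ge> 1" using k kj by (cases j) auto
      moreover have "j \<le> e" using k kj dg g0 by (simp add: mult.commute)
      ultimately show "k \<in> (\<lambda>j. j * m) ` {j \<in> {1..e}. coprime j e}"
        using kj gm by (auto simp: mult.commute)
    qed
  qed
qed

text \<open>Grouping the roots of X^d - 1 by their order gives X^d - 1 = prod over e dvd d of Phi_e.\<close>

lemma Xm1_cyclotomic_C_prod:
  assumes "d > 0"
  shows "Xm1 d = (\<Prod>e\<in>{e. e dvd d}. cyclotomic_C e)"
proof -
  have group: "(\<Prod>k\<in>{k\<in>{1..d}. d div gcd k d = e}. [:- zeta d k, 1:]) = cyclotomic_C e"
    if "e dvd d" for e
  proof -
    obtain m where dm: "d = e * m" using \<open>e dvd d\<close> by blast
    then have "m > 0" "d div e = m" using assms by auto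
    then show ?thesis
      using prod.reindex_bij_betw[OF exponents_of_order[OF that assms], of "\<lambda>k. [:- zeta d k, 1:]"]
      unfolding cyclotomic_C_zeta dm by (simp add: zeta_scale)
  qed
  have order_dvd: "d div gcd k d dvd d" for k
    by (metis dvd_div_mult_self dvd_triv_left gcd_dvd2)
  have "Xm1 d = (\<Prod>k\<in>{1..d}. [:- zeta d k, 1:])" by (rule Xm1_roots_prod[OF assms])
  also have "\<dots> = (\<Prod>e\<in>{e. e dvd d}. \<Prod>k\<in>{k\<in>{1..d}. d div gcd k d = e}. [:- zeta d k, 1:])"
    by (rule prod.group[symmetric]) (use assms order_dvd in auto)
  also have "\<dots> = (\<Prod>e\<in>{e. e dvd d}. cyclotomic_C e)"
    by (rule prod.cong) (use group in auto)
  finally show ?thesis .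
qed


lemma monic_div:
  fixes f g :: "int poly"
  assumes "lead_coeff g = 1"
  shows "\<exists>q r. f = g * q + r \<and> (r = 0 \<or> degree r < degree g)"
proof -
  have g0: "g \<noteq> 0" using assms by auto
  obtain q r where qr: "pseudo_divmod f g = (q, r)" by fastforce
  from pseudo_divmod[OF g0 qr] assms show ?thesis by auto
qed

text \<open>By strong induction on d: Phi_d is the quotient of X^d - 1 by the product of the Phi_e,
  e a proper divisor of d, which by induction is a monic integer polynomial, so the quotient is
  again a monic integer polynomial.\<close>

lemma cyclotomic_C_integral:
  "d > 0 \<Longrightarrow> \<exists>p. ip p = cyclotomic_C d \<and> lead_coeff p = 1 \<and> p dvd Xm1 d"
proof (induction d rule: less_induct)
  case (less d)
  define E where "E = {e. e dvd d \<and> e < d}"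
  have finE: "finite E" unfolding E_def by auto
  have "\<forall>e\<in>E. \<exists>p. ip p = cyclotomic_C e \<and> lead_coeff p = 1"
  proof
    fix e assume "e \<in> E"
    then have "e < d" "e > 0" using less.prems unfolding E_def by (auto intro: Nat.gr0I)
    then show "\<exists>p. ip p = cyclotomic_C e \<and> lead_coeff p = 1" using less.IH by blast
  qed
  then obtain P where P: "\<And>e. e \<in> E \<Longrightarrow> ip (P e) = cyclotomic_C e \<and> lead_coeff (P e) = 1"
    by metis
  define Q where "Q = prod P E"
  have ipQ: "ip Q = (\<Prod>e\<in>E. cyclotomic_C e)" unfolding Q_def using P by simp
  have lQ: "lead_coeff Q = 1" unfolding Q_def lead_coeff_prod using P by simp
  have "{e. e dvd d} = insert d E" "d \<notin> E" unfolding E_def using less.prems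
    by (auto dest: dvd_imp_le)
  then have Xm1_eq: "ip (Xm1 d) = cyclotomic_C d * ip Q"
    using Xm1_cyclotomic_C_prod[OF less.prems] finE unfolding ipQ by simp
  obtain S R where SR: "Xm1 d = Q * S + R" "R = 0 \<or> degree R < degree Q"
    using monic_div[OF lQ] by blast
  have eq: "ip Q * (cyclotomic_C d - ip S) = ip R"
    using Xm1_eq SR(1) by (simp add: algebra_simps)
  have Q0: "ip Q \<noteq> 0" using lQ by auto
  have cS: "cyclotomic_C d = ip S"
  proof (rule ccontr)
    assume "cyclotomic_C d \<noteq> ip S"
    then have x0: "cyclotomic_C d - ip S \<noteq> 0" by simp
    then have "ip R \<noteq> 0" using eq Q0 by (metis mult_eq_0_iff)
    then have "degree R < degree Q" using SR(2) by auto
    moreover have "degree (ip R) = degree Q + degree (cyclotomic_C d - ip S)"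
      unfolding eq[symmetric] using Q0 x0 by (simp add: degree_mult_eq)
    ultimately show False by simp
  qed
  then have "R = 0" using eq by simp
  moreover have "lead_coeff S = 1"
    using cS[symmetric] lead_coeff_ip[of S] by (metis lead_coeff_cyclotomic_C of_int_eq_1_iff)
  ultimately show ?case using cS SR(1) by (intro exI[of _ S]) auto
qed

lemma cyclotomic_ip:
  assumes "d > 0"
  shows "ip (cyclotomic d) = cyclotomic_C d"
proof -
  obtain p where p: "ip p = cyclotomic_C d" using cyclotomic_C_integral[OF assms] by blast
  then have "\<exists>!p. ip p = cyclotomic_C d" by (metis ip_eq_iff)
  then show ?thesis unfolding cyclotomic_def by (rule theI')
qed

lemma cyclotomic_monic: "d > 0 \<Longrightarrow> lead_coeff (cyclotomic d) = 1"
  using lead_coeff_ip[of "cyclotomic d"] by (simp add: cyclotomic_ip)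

lemma cyclotomic_dvd_Xm1:
  assumes "d > 0"
  shows "cyclotomic d dvd Xm1 d"
proof -
  obtain p where p: "ip p = cyclotomic_C d" "p dvd Xm1 d" using cyclotomic_C_integral[OF assms] by blast
  then show ?thesis using cyclotomic_ip[OF assms] by (metis ip_eq_iff)
qed

lemma cyclotomic_root:
  assumes "d > 0"
  shows "poly (ip (cyclotomic d)) (zeta d 1) = 0"
proof -
  have "1 \<in> {k\<in>{1..d}. coprime k d}" using assms by auto
  then show ?thesis unfolding cyclotomic_ip[OF assms] cyclotomic_C_zeta poly_prod
    by (intro prod_zero) auto
qed


section \<open>Minimal polynomials of algebraic integers\<close>

text \<open>Gauss's lemma in the form needed here: a primitive integer polynomial dividing a non-zero
  multiple of h divides h.\<close>

lemma primitive_dvd_smult: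
  fixes f h :: "int poly"
  assumes "content f = 1" "f dvd smult a h" "a \<noteq> 0"
  shows "f dvd h"
proof -
  have "fract_poly f dvd smult (to_fract a) (fract_poly h)"
    using fract_poly_dvd[OF assms(2)] by simp
  then have "fract_poly f dvd fract_poly h"
    using assms(3) by (simp add: dvd_smult_cancel)
  then show ?thesis using fract_poly_dvdD assms(1) by blast
qed

definition min_int_poly :: "complex \<Rightarrow> int poly \<Rightarrow> bool" where
  "min_int_poly z f \<longleftrightarrow> lead_coeff f = 1 \<and> poly (ip f) z = 0 \<and>
     (\<forall>h. poly (ip h) z = 0 \<longrightarrow> f dvd h)"

text \<open>Any root z of a monic integer polynomial has a minimal polynomial: the primitive part of
  a non-zero integer polynomial of least degree vanishing at z.\<close>

lemma min_int_poly_exists: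
  assumes h: "lead_coeff h = 1" "poly (ip h) z = 0"
  shows "\<exists>f. min_int_poly z f"
proof -
  define P where "P g \<longleftrightarrow> g \<noteq> 0 \<and> poly (ip g) z = 0" for g
  have "P h" unfolding P_def using h by auto
  then obtain f0 where f0: "P f0" "\<And>g. P g \<Longrightarrow> degree f0 \<le> degree g"
    using ex_has_least_nat[of P h degree] by blast
  define f where "f = primitive_part f0"
  have f0_nz: "f0 \<noteq> 0" "content f0 \<noteq> 0" using f0 unfolding P_def by simp_all
  have c1: "content f = 1" unfolding f_def using f0_nz by simp
  have deg: "degree f = degree f0" unfolding f_def by simp
  have f_nz: "f \<noteq> 0" using f0_nz unfolding f_def by simp
  have "ip f0 = smult (of_int (content f0)) (ip f)"
    unfolding f_def by (metis ip_smult content_times_primitive_part)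
  then have root: "poly (ip f) z = 0" using f0(1) f0_nz unfolding P_def by auto
  have least: "degree f \<le> degree g" if "g \<noteq> 0" "poly (ip g) z = 0" for g
    using f0(2) deg that unfolding P_def by simp
  have divides: "f dvd g" if g: "poly (ip g) z = 0" for g
  proof -
    obtain a q where aq: "a \<noteq> 0" "smult a g = f * q + pseudo_mod g f"
      using pseudo_mod(1)[OF f_nz, of g] by blast
    have "poly (ip (pseudo_mod g f)) z = 0"
      using arg_cong[OF aq(2), of "\<lambda>p. poly (ip p) z"] g root by simp
    then have "pseudo_mod g f = 0"
      using pseudo_mod(2)[OF f_nz, of g] least by (meson not_le)
    then have "f dvd smult a g" using aq by simp
    then show ?thesis by (rule primitive_dvd_smult[OF c1 _ aq(1)])
  qed
  obtain g where "h = f * g" using divides h(2) by (blast elim: dvdE)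
  then have "lead_coeff f * lead_coeff g = 1" using h(1) by (simp add: lead_coeff_mult)
  then consider "lead_coeff f = 1" | "lead_coeff f = -1" using zmult_eq_1_iff by blast
  then show ?thesis
  proof cases
    case 1
    then show ?thesis using divides root unfolding min_int_poly_def by blast
  next
    case 2
    then have "min_int_poly z (- f)" using divides root unfolding min_int_poly_def by simp
    then show ?thesis by blast
  qed
qed

lemma min_int_poly_degree:
  assumes "min_int_poly z f"
  shows "degree f > 0"
proof (rule ccontr)
  assume "\<not> degree f > 0"
  then have "degree f = 0" by simp
  then have "f = [:lead_coeff f:]" by (metis degree_eq_zeroE coeff_pCons_0)
  then have "f = 1" using assms unfolding min_int_poly_def by (simp add: one_pCons)
  then show False using assms unfolding min_int_poly_def by simp
qed

text \<open>A polynomial dividing non-zero multiples of the minimal polynomial f and of some a not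
  divisible by f is constant: its primitive part divides f, so by minimality it is either an
  associate of f (and then f divides a) or a unit.\<close>

lemma min_int_poly_common_divisor:
  fixes m a :: "int poly"
  assumes mf: "min_int_poly z f" and na: "\<not> f dvd a" and m0: "m \<noteq> 0"
    and mdvd: "m dvd smult \<alpha> f" "m dvd smult \<beta> a" and nz: "\<alpha> \<noteq> 0" "\<beta> \<noteq> 0"
  shows "degree m = 0"
proof (rule ccontr)
  assume deg_m: "degree m \<noteq> 0"
  define m' where "m' = primitive_part m"
  have c1: "content m' = 1" and deg: "degree m' > 0"
    unfolding m'_def using m0 deg_m by simp_all
  have "m = m' * [:content m:]"
    unfolding m'_def using content_times_primitive_part[of m] by simp
  then have "m' dvd m" by (rule dvdI)
  then have "m' dvd smult \<alpha> f" "m' dvd smult \<beta> a" using mdvd dvd_trans by blast+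
  then have m'f: "m' dvd f" and m'a: "m' dvd a" using primitive_dvd_smult[OF c1] nz by blast+
  obtain K where K: "f = m' * K" using m'f by (rule dvdE)
  have "poly (ip m') z * poly (ip K) z = 0"
    using mf unfolding min_int_poly_def K by simp
  then consider "poly (ip m') z = 0" | "poly (ip K) z = 0" by auto
  then show False
  proof cases
    case 1
    then have "f dvd m'" using mf unfolding min_int_poly_def by blast
    then have "f dvd a" using m'a by (rule dvd_trans)
    then show False using na by simp
  next
    case 2
    then have "f dvd K" using mf unfolding min_int_poly_def by blast
    then obtain L where L: "K = f * L" by (rule dvdE)
    have "f * (m' * L) = f * 1" using K L by (metis mult.assoc mult.commute mult_1_right)
    moreover have "f \<noteq> 0" using mf unfolding min_int_poly_def by auto
    ultimately have "m' * L = 1" by simp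
    moreover have "m' \<noteq> 0" "L \<noteq> 0" using \<open>m' * L = 1\<close> by auto
    ultimately have "degree m' = 0" using degree_mult_eq[of m' L] by simp
    then show False using deg by simp
  qed
qed

text \<open>If f is the minimal polynomial of z and f does not divide a, then the ideal (a, f) of
  Z[X] contains a positive integer: a non-zero element m of least degree in it divides, by
  pseudo-division, non-zero multiples of a and f, and so is a constant.\<close>

lemma min_int_poly_bezout:
  fixes a :: "int poly"
  assumes mf: "min_int_poly z f" and na: "\<not> f dvd a"
  shows "\<exists>N u v. N > 0 \<and> [:N:] = a * u + f * v"
proof -
  define I where "I h \<longleftrightarrow> h \<noteq> 0 \<and> (\<exists>u v. h = a * u + f * v)" for h
  have "I a" unfolding I_def using na by (intro conjI exI[of _ 1] exI[of _ 0]) auto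
  then obtain m where m: "I m" "\<And>h. I h \<Longrightarrow> degree m \<le> degree h"
    using ex_has_least_nat[of I a degree] by blast
  obtain u v where uv: "m = a * u + f * v" and m0: "m \<noteq> 0" using m(1) unfolding I_def by blast
  have m_dvd: "\<exists>\<alpha>. \<alpha> \<noteq> 0 \<and> m dvd smult \<alpha> x" if x: "x = a * u' + f * v'" for x u' v'
  proof -
    define r where "r = pseudo_mod x m"
    obtain \<alpha> q where aq: "\<alpha> \<noteq> 0" "smult \<alpha> x = m * q + r"
      using pseudo_mod(1)[OF m0, of x] unfolding r_def by blast
    have "r = smult \<alpha> x - m * q" using aq by simp
    then have "r = a * (smult \<alpha> u' - u * q) + f * (smult \<alpha> v' - v * q)"
      unfolding x uv by (simp add: algebra_simps smult_add_right mult_smult_right)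
    then have "r = 0 \<or> I r" unfolding I_def by blast
    then have "r = 0" using pseudo_mod(2)[OF m0, of x] m(2) unfolding r_def by (meson not_le)
    then show ?thesis using aq by auto
  qed
  obtain \<alpha> where \<alpha>: "\<alpha> \<noteq> 0" "m dvd smult \<alpha> f" using m_dvd[of f 0 1] by auto
  obtain \<beta> where \<beta>: "\<beta> \<noteq> 0" "m dvd smult \<beta> a" using m_dvd[of a 1 0] by auto
  have "degree m = 0"
    by (rule min_int_poly_common_divisor[OF mf na m0 \<alpha>(2) \<beta>(2) \<alpha>(1) \<beta>(1)])
  then obtain N where N: "m = [:N:]" "N \<noteq> 0" using m0 by (metis degree_eq_zeroE pCons_eq_0_iff)
  show ?thesis
  proof (cases "N > 0")
    case True then show ?thesis using N uv by metis
  next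
    case False
    have "[:- N:] = - m" using N by simp
    also have "\<dots> = a * (- u) + f * (- v)" unfolding uv by (simp add: algebra_simps)
    finally have "[:- N:] = a * (- u) + f * (- v)" .
    moreover have "- N > 0" using False N by simp
    ultimately show ?thesis by blast
  qed
qed


lemma diff_dvd_power_diff:
  fixes x y :: "'a::comm_ring_1"
  shows "(x - y) dvd (x ^ n - y ^ n)"
proof (induction n)
  case (Suc n)
  have "x ^ Suc n - y ^ Suc n = x * (x ^ n - y ^ n) + (x - y) * y ^ n"
    by (simp add: algebra_simps)
  then show ?case using Suc by (simp add: dvd_add dvd_mult)
qed simp

lemma binomial_prime:
  fixes x y :: "'a::comm_ring_1"
  assumes p: "prime p"
  shows "\<exists>t. (x + y) ^ p = x ^ p + y ^ p + of_nat p * t"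
proof -
  have p2: "p \<ge> 2" using p by (simp add: prime_ge_2_nat)
  define T where "T = (\<Sum>k\<in>{1..p-1}. of_nat ((p choose k) div p) * x ^ k * y ^ (p - k))"
  have "(x + y) ^ p = (\<Sum>k\<le>p. of_nat (p choose k) * x ^ k * y ^ (p - k))"
    by (rule binomial_ring)
  also have "{..p} = insert 0 (insert p {1..p-1})" using p2 by auto
  also have "(\<Sum>k\<in>insert 0 (insert p {1..p-1}). of_nat (p choose k) * x ^ k * y ^ (p - k))
      = y ^ p + (x ^ p + (\<Sum>k\<in>{1..p-1}. of_nat (p choose k) * x ^ k * y ^ (p - k)))"
    using p2 by (simp add: sum.insert)
  also have "(\<Sum>k\<in>{1..p-1}. of_nat (p choose k) * x ^ k * y ^ (p - k)) = of_nat p * T"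
    unfolding sum_distrib_left T_def
  proof (rule sum.cong[OF refl])
    fix k assume "k \<in> {1..p-1}"
    then have "p dvd (p choose k)" using p by (intro dvd_choose_prime) auto
    then have "(of_nat (p choose k) :: 'a) = of_nat p * of_nat ((p choose k) div p)"
      by (metis dvd_mult_div_cancel of_nat_mult)
    then show "of_nat (p choose k) * x ^ k * y ^ (p - k) =
        of_nat p * (of_nat ((p choose k) div p) * x ^ k * y ^ (p - k))"
      by (simp add: mult.assoc)
  qed
  finally show ?thesis by (intro exI[of _ T]) (simp add: algebra_simps)
qed

lemma fermat_int:
  assumes p: "prime p"
  shows "int p dvd a ^ p - a"
proof -
  have nat_case: "int p dvd int b ^ p - int b" for b
  proof (induction b)
    case 0 then show ?case using p by (simp add: prime_gt_0_nat power_0_left)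
  next
    case (Suc b)
    obtain t :: int where t: "(int b + 1) ^ p = int b ^ p + 1 ^ p + of_nat p * t"
      using binomial_prime[OF p] by blast
    have "int (Suc b) ^ p - int (Suc b) = (int b + 1) ^ p - (int b + 1)"
      by (simp add: add.commute)
    also have "\<dots> = (int b ^ p - int b) + int p * t" using t by simp
    finally have eq: "int (Suc b) ^ p - int (Suc b) = (int b ^ p - int b) + int p * t" .
    show ?case unfolding eq using Suc by simp
  qed
  define r where "r = a mod int p"
  have r0: "r \<ge> 0" using p unfolding r_def by (simp add: prime_gt_0_nat)
  have d1: "int p dvd a - r" unfolding r_def by (simp add: minus_mod_eq_mult_div)
  have d2: "int p dvd a ^ p - r ^ p" using dvd_trans[OF d1 diff_dvd_power_diff] .
  have d3: "int p dvd r ^ p - r" using nat_case[of "nat r"] r0 by simp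
  have "a ^ p - a = (a ^ p - r ^ p) + (r ^ p - r) - (a - r)" by simp
  then show ?thesis using d1 d2 d3 by (metis dvd_add dvd_diff)
qed

lemma frobenius_int_poly:
  fixes g :: "int poly"
  assumes p: "prime p"
  shows "\<exists>t. g ^ p = pcompose g (monom 1 p) + smult (int p) t"
proof (induction g)
  case 0
  show ?case using p by (intro exI[of _ 0]) (simp add: prime_gt_0_nat power_0_left)
next
  case (pCons a g1)
  obtain t1 where t1: "g1 ^ p = pcompose g1 (monom 1 p) + smult (int p) t1"
    using pCons.IH by blast
  obtain t2 where t2: "([:a:] + [:0,1:] * g1) ^ p = [:a:] ^ p + ([:0,1:] * g1) ^ p + of_nat p * t2"
    using binomial_prime[OF p] by blast
  obtain s where s: "a ^ p - a = int p * s" using fermat_int[OF p, of a] by (elim dvdE)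
  have pc: "pCons a g1 = [:a:] + [:0,1:] * g1" by (simp add: mult_pCons_left)
  have xp: "[:0,1:] ^ p = (monom 1 p :: int poly)" by (simp add: monom_altdef)
  have ca: "[:a:] ^ p = [:a:] + smult (int p) [:s:]"
    using s by (simp add: poly_const_pow algebra_simps)
  have "pCons a g1 ^ p = [:a:] + smult (int p) [:s:] +
      monom 1 p * (pcompose g1 (monom 1 p) + smult (int p) t1) + smult (int p) t2"
    unfolding pc t2 ca power_mult_distrib xp t1 by (simp add: of_nat_mult_conv_smult)
  also have "\<dots> = pcompose (pCons a g1) (monom 1 p) + smult (int p) ([:s:] + monom 1 p * t1 + t2)"
    by (simp add: pcompose_pCons smult_add_right distrib_left add_ac)
  finally show ?case by blast
qed

text \<open>If f * A + p * B = 1 with f monic of positive degree, then p divides the leading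
  coefficient of A: it is the coefficient of f * A in degree deg f + deg A, where 1 vanishes.\<close>

lemma unit_mod_prime_lead_coeff:
  fixes f A B :: "int poly" and p :: int
  assumes lf: "lead_coeff f = 1" and df: "degree f > 0" and eq: "f * A + smult p B = 1"
  shows "p dvd lead_coeff A"
proof -
  let ?k = "degree f + degree A"
  have "coeff (f * A) ?k = lead_coeff A" using coeff_mult_degree_sum[of f A] lf by simp
  moreover have "coeff (1::int poly) ?k = 0" using df by simp
  ultimately have "lead_coeff A + p * coeff B ?k = 0"
    using arg_cong[OF eq, of "\<lambda>r. coeff r ?k"] by simp
  then have "lead_coeff A = p * (- coeff B ?k)" by (simp add: algebra_simps)
  then show ?thesis by (rule dvdI)
qed

text \<open>Hence a monic integer polynomial of positive degree is not a unit modulo p: by induction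
  on A, the leading term of A can always be absorbed into the multiple of p.\<close>

lemma monic_not_unit_mod_prime:
  fixes f A B :: "int poly" and p :: int
  assumes lf: "lead_coeff f = 1" and df: "degree f > 0" and p2: "p \<ge> 2"
  shows "f * A + smult p B \<noteq> 1"
proof (induction "if A = 0 then 0 else Suc (degree A)" arbitrary: A B rule: less_induct)
  case less
  show ?case
  proof
    assume eq: "f * A + smult p B = 1"
    show False
    proof (cases "A = 0")
      case True
      then have "coeff (smult p B) 0 = coeff (1::int poly) 0" using eq by simp
      then have "p * coeff B 0 = 1" by simp
      then show False using p2 by (auto simp: zmult_eq_1_iff)
    next
      case A0: False
      define m where "m = degree A"
      obtain a' where a': "lead_coeff A = p * a'"
        using unit_mod_prime_lead_coeff[OF lf df eq] by (elim dvdE)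
      define A' where "A' = A - monom (lead_coeff A) m"
      have cA': "coeff A' k = 0" if "k \<ge> m" for k
        using that unfolding A'_def m_def
        by (cases "k = degree A") (auto simp: coeff_monom coeff_eq_0)
      have smaller: "(if A' = 0 then 0 else Suc (degree A')) < (if A = 0 then 0 else Suc (degree A))"
      proof (cases "A' = 0")
        case False
        then have "m > 0" using cA' by (metis gr0I le0 leading_coeff_0_iff)
        then have "degree A' \<le> m - 1" using cA' by (intro degree_le) auto
        then show ?thesis using A0 False \<open>m > 0\<close> unfolding m_def by simp
      qed (use A0 in simp)
      have "monom (lead_coeff A) m = smult p (monom a' m)" unfolding a' by (simp add: smult_monom)
      then have "f * A' + smult p (B + f * monom a' m) = 1"
        using eq unfolding A'_def by (simp add: algebra_simps smult_add_right mult_smult_right)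
      then show False using less.hyps[OF smaller] by simp
    qed
  qed
qed

text \<open>X * (X^d - 1)' - d * (X^d - 1) = d: the separability of X^d - 1 away from primes
  dividing d.\<close>

lemma Xm1_derivative_identity:
  "[:0, 1:] * pderiv (Xm1 d) - smult (int d) (Xm1 d) = [:int d:]"
proof (cases d)
  case (Suc n)
  have "pderiv (Xm1 d :: int poly) = monom (int d) n"
    unfolding Xm1_def Suc by (simp add: pderiv_diff pderiv_monom)
  moreover have "[:0, 1:] * monom (int d) n = monom (int d) d"
    unfolding Suc by (simp add: monom_Suc mult_pCons_left)
  moreover have "smult (int d) (Xm1 d) = monom (int d) d - [:int d:]"
    unfolding Xm1_def by (simp add: smult_diff_right smult_monom)
  ultimately show ?thesis by simp
qed (simp add: Xm1_def)


section \<open>Irreducibility of Phi_d\<close>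

text \<open>If X^d - 1 = f * g and f divides g(X^p), then d^p lies in the ideal (f, p) of Z[X]: the
  derivative identity writes d as U * g + f * V, and modulo f its p-th power is
  U^p * g^p = U^p * g(X^p) modulo p, which is divisible by f.\<close>

lemma Xm1_factor_frobenius_ideal:
  fixes f g :: "int poly"
  assumes g: "Xm1 d = f * g" and p: "prime p" and fG: "f dvd pcompose g (monom 1 p)"
  shows "\<exists>A B. [:int d ^ p:] = f * A + smult (int p) B"
proof -
  obtain s where s: "pcompose g (monom 1 p) = f * s" using fG by (rule dvdE)
  obtain t where t: "g ^ p = pcompose g (monom 1 p) + smult (int p) t"
    using frobenius_int_poly[OF p] by blast
  define U where "U = [:0, 1:] * pderiv f"
  define V where "V = [:0, 1:] * pderiv g - smult (int d) g"
  have "[:int d:] = [:0, 1:] * pderiv (Xm1 d) - smult (int d) (Xm1 d)"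
    using Xm1_derivative_identity by simp
  also have "\<dots> = U * g + f * V"
    unfolding g U_def V_def by (simp add: pderiv_mult algebra_simps)
  finally have d_eq: "[:int d:] = U * g + f * V" .
  have "f dvd (U * g + f * V) ^ p - (U * g) ^ p"
    using diff_dvd_power_diff[of "U * g + f * V" "U * g" p] by (simp add: dvd_mult_left)
  then obtain w where w: "(U * g + f * V) ^ p = (U * g) ^ p + f * w"
    by (metis add_diff_cancel_left' diff_add_cancel dvdE)
  have "[:int d ^ p:] = [:int d:] ^ p" by (simp add: poly_const_pow)
  also have "\<dots> = U ^ p * (f * s + smult (int p) t) + f * w"
    unfolding d_eq w power_mult_distrib t s ..
  also have "\<dots> = f * (w + U ^ p * s) + smult (int p) (U ^ p * t)"
    by (simp add: algebra_simps mult_smult_right)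
  finally show ?thesis by blast
qed

text \<open>Dedekind's argument.  Let f be the minimal polynomial of a d-th root of unity z and p a
  prime not dividing d.  Write X^d - 1 = f * g.  If f(z^p) were non-zero then g(z^p) = 0, so f
  divides g(X^p) and d^p lies in (f, p).  As d^p is invertible modulo p, f would be a unit
  modulo p, which is impossible.\<close>

lemma min_int_poly_frobenius:
  assumes mf: "min_int_poly z f" and zd: "z ^ d = 1" and p: "prime p" and pd: "\<not> p dvd d"
  shows "poly (ip f) (z ^ p) = 0"
proof (rule ccontr)
  assume nz: "poly (ip f) (z ^ p) \<noteq> 0"
  have lf: "lead_coeff f = 1" and fdvd: "\<And>h. poly (ip h) z = 0 \<Longrightarrow> f dvd h"
    using mf unfolding min_int_poly_def by auto
  obtain g where g: "Xm1 d = f * g" using fdvd[of "Xm1 d"] zd by (auto elim: dvdE)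
  have "poly (ip f) (z ^ p) * poly (ip g) (z ^ p) = 0"
    using arg_cong[OF g, of "\<lambda>h. poly (ip h) (z ^ p)"] zd
    by (simp add: power_mult[symmetric] mult.commute[of p] power_mult)
  then have "poly (ip g) (z ^ p) = 0" using nz by simp
  then have "poly (ip (pcompose g (monom 1 p))) z = 0"
    by (simp add: poly_pcompose poly_monom)
  then obtain A B where AB: "[:int d ^ p:] = f * A + smult (int p) B"
    using Xm1_factor_frobenius_ideal[OF g p] fdvd by blast
  have "coprime p d" using p pd by (rule prime_imp_coprime)
  then have "gcd (int d ^ p) (int p) = 1" by (simp add: coprime_commute)
  then obtain e l where bez: "e * int d ^ p + l * int p = 1"
    by (metis bezout_coefficients_fst_snd)
  have "(1 :: int poly) = smult e [:int d ^ p:] + smult (int p) [:l:]"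
    using bez by (simp add: algebra_simps)
  also have "\<dots> = f * smult e A + smult (int p) (smult e B + [:l:])"
    unfolding AB by (simp add: algebra_simps smult_add_right mult_smult_right)
  finally have "f * smult e A + smult (int p) (smult e B + [:l:]) = 1" by simp
  moreover have "int p \<ge> 2" using p prime_ge_2_nat by fastforce
  ultimately show False using monic_not_unit_mod_prime[OF lf min_int_poly_degree[OF mf]] by blast
qed

text \<open>Hence the minimal polynomial of zeta d 1 vanishes at every primitive d-th root of unity:
  write k as a product of primes, none dividing d.\<close>

lemma min_int_poly_primitive_roots:
  assumes d: "d > 0" and mf: "min_int_poly (zeta d 1) f"
  shows "k > 0 \<Longrightarrow> coprime k d \<Longrightarrow> poly (ip f) (zeta d k) = 0"
proof (induction k rule: less_induct)
  case (less k)
  show ?case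
  proof (cases "k = 1")
    case True then show ?thesis using mf unfolding min_int_poly_def by simp
  next
    case False
    then obtain p where p: "prime p" "p dvd k" using prime_factor_nat by blast
    then obtain k' where k': "k = p * k'" by (elim dvdE)
    have k'0: "k' > 0" using less.prems k' by simp
    have "k' < k" using k' k'0 prime_gt_1_nat[OF p(1)] by simp
    have ck': "coprime k' d" using less.prems(2) k' by simp
    have pd: "\<not> p dvd d"
      using p less.prems(2) by (metis coprime_common_divisor not_prime_unit)
    have root: "poly (ip f) (zeta d k') = 0" using less.IH[OF \<open>k' < k\<close> k'0 ck'] .
    have unity: "zeta d k' ^ d = 1" using d by (simp add: zeta_pow zeta_eq_1_iff)
    obtain f' where mf': "min_int_poly (zeta d k') f'"
      using min_int_poly_exists[of "Xm1 d" "zeta d k'"] unity d by (auto simp: lead_coeff_Xm1)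
    then have "f' dvd f" using root unfolding min_int_poly_def by blast
    moreover have "poly (ip f') (zeta d k' ^ p) = 0"
      by (rule min_int_poly_frobenius[OF mf' unity p(1) pd])
    ultimately show ?thesis unfolding k' by (auto simp: zeta_pow mult.commute elim!: dvdE)
  qed
qed

text \<open>Irreducibility of the cyclotomic polynomial: Phi_d is the minimal polynomial of
  zeta d 1, since that minimal polynomial is divisible by all X - zeta d k, k coprime to d.\<close>

theorem cyclotomic_min_int_poly:
  assumes d: "d > 0"
  shows "min_int_poly (zeta d 1) (cyclotomic d)"
proof -
  obtain f where mf: "min_int_poly (zeta d 1) f"
    using min_int_poly_exists[of "Xm1 d" "zeta d 1"] d by (auto simp: lead_coeff_Xm1 zeta_pow zeta_eq_1_iff)
  have lf: "lead_coeff f = 1" using mf unfolding min_int_poly_def by simp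
  define K where "K = {k\<in>{1..d}. coprime k d}"
  have inj: "inj_on (zeta d) K" using zeta_inj[OF d] unfolding K_def by (rule inj_on_subset) auto
  have "(\<Prod>a\<in>zeta d ` K. [:-a, 1:]) dvd ip f"
    by (rule prod_roots_dvd) (use min_int_poly_primitive_roots[OF d mf] in \<open>auto simp: K_def\<close>)
  moreover have "(\<Prod>a\<in>zeta d ` K. [:-a, 1:]) = cyclotomic_C d"
    unfolding cyclotomic_C_zeta K_def[symmetric] using prod.reindex[OF inj, of "\<lambda>a. [:-a, 1:]"] by simp
  ultimately have "ip (cyclotomic d) dvd ip f" using cyclotomic_ip[OF d] by simp
  moreover have "ip f \<noteq> 0" using lf by auto
  ultimately have "degree (cyclotomic d) \<le> degree f" by (metis dvd_imp_degree_le degree_ip)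
  moreover have fd: "f dvd cyclotomic d" using mf cyclotomic_root[OF d] unfolding min_int_poly_def by simp
  moreover have "cyclotomic d \<noteq> 0" using cyclotomic_monic[OF d] by auto
  ultimately have "f = cyclotomic d"
    using monic_dvd_eq[OF fd lf cyclotomic_monic[OF d]] dvd_imp_degree_le by (metis le_antisym)
  then show ?thesis using mf by simp
qed


section \<open>The ring A = Z[q]/(Phi_d)\<close>

lemma abs_cyc_eq_0_iff: "(abs_cyc p :: 'd cyc) = 0 \<longleftrightarrow> cyclotomic CARD('d) dvd p"
  by (simp add: zero_cyc.abs_eq cyc.abs_eq_iff cyc_rel_def)

lemma abs_cyc_add: "abs_cyc (p + r) = abs_cyc p + abs_cyc r" by (simp add: plus_cyc.abs_eq)
lemma abs_cyc_mult: "abs_cyc (p * r) = abs_cyc p * abs_cyc r" by (simp add: times_cyc.abs_eq)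
lemma abs_cyc_diff: "abs_cyc (p - r) = abs_cyc p - abs_cyc r" by (simp add: minus_cyc.abs_eq)
lemma abs_cyc_uminus: "abs_cyc (- p) = - abs_cyc p" by (simp add: uminus_cyc.abs_eq)
lemma abs_cyc_one: "abs_cyc 1 = 1" by (simp add: one_cyc.abs_eq)
lemma abs_cyc_zero: "abs_cyc 0 = 0" by (simp add: zero_cyc.abs_eq)

lemma abs_cyc_pow: "abs_cyc (p ^ n) = abs_cyc p ^ n"
  by (induction n) (simp_all add: abs_cyc_one abs_cyc_mult)

lemma abs_cyc_surj: "\<exists>p. a = abs_cyc p"
  by (induction a rule: cyc.abs_induct) blast

lemma cyc_q_pow: "(cyc_q :: 'd cyc) ^ m = abs_cyc (monom 1 m)"
  by (simp add: cyc_q.abs_eq abs_cyc_pow monom_altdef)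

lemma cyc_generated_by_q:
  fixes S :: "'d cyc set"
  assumes one: "1 \<in> S" and add: "\<And>x y. x \<in> S \<Longrightarrow> y \<in> S \<Longrightarrow> x + y \<in> S"
    and neg: "\<And>x. x \<in> S \<Longrightarrow> - x \<in> S" and mult_q: "\<And>x. x \<in> S \<Longrightarrow> cyc_q * x \<in> S"
  shows "x \<in> S"
proof -
  have zero: "0 \<in> S" using add[OF one neg[OF one]] by simp
  have const_nat: "abs_cyc [:int m:] \<in> S" for m
  proof (induction m)
    case 0 then show ?case using zero by (simp add: abs_cyc_zero)
  next
    case (Suc m)
    have "abs_cyc [:int (Suc m):] = abs_cyc [:int m:] + (1 :: 'd cyc)"
      by (simp add: abs_cyc_add[symmetric] abs_cyc_one[symmetric] one_pCons add.commute)
    then show ?case using add[OF Suc one] by simp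
  qed
  have const: "abs_cyc [:a:] \<in> S" for a
  proof (cases "a \<ge> 0")
    case True then show ?thesis using const_nat[of "nat a"] by simp
  next
    case False
    then have "[:a:] = - [:int (nat (- a)):]" by simp
    then have "abs_cyc [:a:] = - (abs_cyc [:int (nat (- a)):] :: 'd cyc)"
      by (metis abs_cyc_uminus)
    moreover have "- (abs_cyc [:int (nat (- a)):] :: 'd cyc) \<in> S" by (rule neg[OF const_nat])
    ultimately show ?thesis by (simp only:)
  qed
  have "abs_cyc p \<in> S" for p
  proof (induction p)
    case 0 then show ?case using zero by (simp add: abs_cyc_zero)
  next
    case (pCons a p)
    have "pCons a p = [:a:] + [:0, 1:] * p" by (simp add: mult_pCons_left)
    then have "abs_cyc (pCons a p) = abs_cyc [:a:] + cyc_q * (abs_cyc p :: 'd cyc)"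
      by (simp only: abs_cyc_add abs_cyc_mult cyc_q.abs_eq)
    then show ?case using add[OF const mult_q[OF pCons.IH]] by simp
  qed
  then show ?thesis using abs_cyc_surj[of x] by blast
qed

text \<open>From now on d > 0, so that Phi_d is defined as a monic polynomial and is irreducible.\<close>

context
  assumes d0: "CARD('d) > 0"
begin

text \<open>By irreducibility of Phi_d, A embeds into C via q |-> zeta d 1: a class vanishes iff its
  representatives vanish at the primitive root.\<close>

lemma abs_cyc_eq_0_iff_root:
  "(abs_cyc p :: 'd cyc) = 0 \<longleftrightarrow> poly (ip p) (zeta CARD('d) 1) = 0"
  using cyclotomic_min_int_poly[OF d0] unfolding abs_cyc_eq_0_iff min_int_poly_def
  by (metis dvdE mult_zero_left ip_mult poly_mult)

lemma cyc_q_pow_eq_1_iff: "(cyc_q :: 'd cyc) ^ m = 1 \<longleftrightarrow> CARD('d) dvd m"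
proof -
  have "(cyc_q :: 'd cyc) ^ m = 1 \<longleftrightarrow> (cyc_q :: 'd cyc) ^ m - 1 = 0" by simp
  also have "(cyc_q :: 'd cyc) ^ m - 1 = abs_cyc (monom 1 m - 1)"
    by (simp add: cyc_q_pow abs_cyc_diff abs_cyc_one)
  finally have "(cyc_q :: 'd cyc) ^ m = 1 \<longleftrightarrow> zeta CARD('d) 1 ^ m - 1 = 0"
    by (simp only: abs_cyc_eq_0_iff_root) (simp add: poly_monom)
  then show ?thesis by (simp add: zeta_pow zeta_eq_1_iff[OF d0])
qed

lemma cyc_no_zero_divisors:
  fixes x y :: "'d cyc"
  assumes "x * y = 0"
  shows "x = 0 \<or> y = 0"
proof -
  obtain p r where "x = abs_cyc p" "y = abs_cyc r" using abs_cyc_surj by metis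
  then show ?thesis using assms by (simp add: abs_cyc_mult[symmetric] abs_cyc_eq_0_iff_root)
qed

lemma cyc_q_pow_minus_1_cancel:
  fixes x :: "'d cyc"
  assumes "\<not> CARD('d) dvd m" and "(cyc_q ^ m - 1) * x = 0"
  shows "x = 0"
proof -
  have "(cyc_q :: 'd cyc) ^ m \<noteq> 1" using cyc_q_pow_eq_1_iff assms(1) by blast
  then have "(cyc_q :: 'd cyc) ^ m - 1 \<noteq> 0" by simp
  then show ?thesis using cyc_no_zero_divisors[OF assms(2)] by blast
qed

lemma cyc_nonzero_divides_int:
  fixes c :: "'d cyc"
  assumes "c \<noteq> 0"
  shows "\<exists>N u. N > 0 \<and> abs_cyc [:N:] = c * u"
proof -
  obtain a where a: "c = abs_cyc a" using abs_cyc_surj by blast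
  have "\<not> cyclotomic CARD('d) dvd a" using assms unfolding a by (simp add: abs_cyc_eq_0_iff)
  then obtain N u v where N: "N > 0" "[:N:] = a * u + cyclotomic CARD('d) * v"
    using min_int_poly_bezout[OF cyclotomic_min_int_poly[OF d0]] by blast
  have "(abs_cyc (cyclotomic CARD('d) * v) :: 'd cyc) = 0" by (simp add: abs_cyc_eq_0_iff)
  then have "(abs_cyc [:N:] :: 'd cyc) = c * abs_cyc u"
    unfolding N(2) a by (simp add: abs_cyc_add abs_cyc_mult)
  then show ?thesis using N(1) by blast
qed

text \<open>A is a finitely generated abelian group (Phi_d is monic), so A/NA is finite for N > 0:
  every element is congruent modulo N to one of finitely many residues.\<close>

lemma cyc_finite_residues:
  assumes N: "N > 0"
  shows "\<exists>R. finite R \<and> (\<forall>x::'d cyc. \<exists>r\<in>R. \<exists>b. x = r + abs_cyc [:N:] * b)"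
proof -
  define D where "D = degree (cyclotomic CARD('d))"
  define R where "R = (\<lambda>xs. abs_cyc (Poly xs) :: 'd cyc) ` {xs. set xs \<subseteq> {0..<N} \<and> length xs = D}"
  have "finite R" unfolding R_def by (intro finite_imageI finite_lists_length_eq) simp
  moreover have "\<exists>r\<in>R. \<exists>b. x = r + abs_cyc [:N:] * b" for x :: "'d cyc"
  proof -
    obtain p where p: "x = abs_cyc p" using abs_cyc_surj by blast
    obtain s r0 where sr: "p = cyclotomic CARD('d) * s + r0" "r0 = 0 \<or> degree r0 < D"
      using monic_div[OF cyclotomic_monic[OF d0]] unfolding D_def by blast
    have "(abs_cyc (cyclotomic CARD('d) * s) :: 'd cyc) = 0" by (simp add: abs_cyc_eq_0_iff)
    then have xr: "x = abs_cyc r0" unfolding p sr(1) abs_cyc_add by simp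
    define xs where "xs = map (\<lambda>i. coeff r0 i mod N) [0..<D]"
    define ys where "ys = map (\<lambda>i. coeff r0 i div N) [0..<D]"
    have c0: "coeff r0 i = 0" if "i \<ge> D" for i
      using sr(2) that by (auto simp: coeff_eq_0)
    have "r0 = Poly xs + smult N (Poly ys)"
    proof (rule poly_eqI)
      fix i show "coeff r0 i = coeff (Poly xs + smult N (Poly ys)) i"
        by (cases "i < D") (auto simp: xs_def ys_def nth_default_def c0)
    qed
    then have "x = abs_cyc (Poly xs) + abs_cyc [:N:] * abs_cyc (Poly ys)"
      unfolding xr by (simp add: abs_cyc_add abs_cyc_mult[symmetric])
    moreover have "abs_cyc (Poly xs) \<in> R" unfolding R_def xs_def
      by (rule imageI) (use N in auto)
    ultimately show ?thesis by blast
  qed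
  ultimately show ?thesis by blast
qed


end


section \<open>Coordinate vectors and the Burau generators\<close>

definition coord :: "nat \<Rightarrow> 'a::zero \<Rightarrow> nat \<Rightarrow> 'a" where
  "coord j c = (\<lambda>k. if k = j then c else 0)"

lemma coord_add: "coord j (a + b) = coord j a + coord j (b::'a::monoid_add)"
  by (rule ext) (simp add: coord_def)

lemma coord_uminus: "coord j (- a) = - coord j (a::'a::ab_group_add)"
  by (rule ext) (simp add: coord_def)

text \<open>T_j changes only the j-th coordinate, by the amount burau_defect q v j.\<close>

definition burau_defect :: "'a::comm_ring \<Rightarrow> (nat \<Rightarrow> 'a) \<Rightarrow> nat \<Rightarrow> 'a" where
  "burau_defect q v j = - q * v j + q * v (j - 1) + v (j + 1) - v j"

text \<open>Sets closed under addition, negation and the generators T_j, j = 1..n; every additive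
  subgroup or subspace stable under the Burau image is of this kind.\<close>

definition burau_closed :: "nat \<Rightarrow> 'a::comm_ring \<Rightarrow> (nat \<Rightarrow> 'a) set \<Rightarrow> bool" where
  "burau_closed n q W \<longleftrightarrow> (\<forall>v\<in>W. \<forall>w\<in>W. v + w \<in> W) \<and> (\<forall>v\<in>W. - v \<in> W) \<and>
     (\<forall>j\<in>{1..n}. \<forall>v\<in>W. burau_T q j v \<in> W)"

lemma stable_burau_T:
  assumes "stable (burau_image q n) W" "j \<in> {1..n}" "v \<in> W"
  shows "burau_T q j v \<in> W"
proof -
  have "burau_T q j \<circ> id \<in> burau_image q n" using assms(2) by (intro burau_image.gen burau_image.id)
  then show ?thesis using assms(1,3) unfolding stable_def by fastforce
qed

text \<open>Any vector fixed by all T_j satisfies v_(k+1) - v_k = q^k v_1, so summing,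
  (1 + q + ... + q^n) v_1 = 0; hence it vanishes as soon as q^(n+1) - 1 is a non-zero-divisor.\<close>

lemma burau_fixed_vector:
  fixes q :: "'a::{comm_ring, comm_monoid_mult}"
  assumes v: "v \<in> vecs n" and fixed: "\<forall>j\<in>{1..n}. burau_defect q v j = 0"
    and cancel: "\<And>x. (q ^ Suc n - 1) * x = 0 \<Longrightarrow> x = 0"
  shows "v = 0"
proof -
  have v0: "v k = 0" if "k \<notin> {1..n}" for k using v that unfolding vecs_def by blast
  have step: "k \<le> n \<Longrightarrow> v (Suc k) - v k = q ^ k * v 1" for k
  proof (induction k)
    case 0 then show ?case using v0[of 0] by simp
  next
    case (Suc k)
    have "burau_defect q v (Suc k) = 0" using fixed Suc.prems by auto
    then have "v (Suc (Suc k)) - v (Suc k) = q * (v (Suc k) - v k)"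
      unfolding burau_defect_def by (simp add: algebra_simps)
    also have "\<dots> = q ^ Suc k * v 1" using Suc by (simp add: mult.assoc)
    finally show ?case .
  qed
  have geom: "(q - 1) * (\<Sum>k<m. q ^ k) = q ^ m - 1" for m
    by (induction m) (simp_all add: algebra_simps)
  have "(\<Sum>k<Suc n. v (Suc k) - v k) = v (Suc n) - v 0" by (rule sum_lessThan_telescope)
  also have "\<dots> = 0" using v0[of 0] v0[of "Suc n"] by simp
  finally have "(\<Sum>k<Suc n. q ^ k * v 1) = 0" using step by simp
  then have "(\<Sum>k<Suc n. q ^ k) * v 1 = 0" by (simp only: sum_distrib_right)
  then have "(q ^ Suc n - 1) * v 1 = 0" by (metis geom mult.assoc mult_zero_right)
  then have v1: "v 1 = 0" by (rule cancel)
  have "k \<le> Suc n \<Longrightarrow> v k = 0" for k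
  proof (induction k)
    case 0 then show ?case using v0[of 0] by simp
  next
    case (Suc k) then show ?case using step[of k] v1 by simp
  qed
  then show "v = 0" using v0 by (intro ext) (metis atLeastAtMost_iff le_SucI zero_fun_def)
qed

context
  fixes n :: nat and q :: "'a::{comm_ring, comm_monoid_mult}" and W :: "(nat \<Rightarrow> 'a) set"
  assumes closed: "burau_closed n q W"
begin

lemma closed_add: "v \<in> W \<Longrightarrow> w \<in> W \<Longrightarrow> v + w \<in> W"
  using closed unfolding burau_closed_def by blast

lemma closed_neg: "v \<in> W \<Longrightarrow> - v \<in> W"
  using closed unfolding burau_closed_def by blast

lemma closed_diff: "v \<in> W \<Longrightarrow> w \<in> W \<Longrightarrow> v - w \<in> W"
  using closed_add[OF _ closed_neg] by (simp only: diff_conv_add_uminus)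

lemma closed_T: "j \<in> {1..n} \<Longrightarrow> v \<in> W \<Longrightarrow> burau_T q j v \<in> W"
  using closed unfolding burau_closed_def by blast

lemma coord_defect: "v \<in> W \<Longrightarrow> j \<in> {1..n} \<Longrightarrow> coord j (burau_defect q v j) \<in> W"
proof -
  assume "v \<in> W" "j \<in> {1..n}"
  moreover have "burau_T q j v - v = coord j (burau_defect q v j)"
    by (rule ext) (simp add: burau_T_def coord_def burau_defect_def)
  ultimately show ?thesis by (metis closed_diff closed_T)
qed

lemma coord_mult_q: "j \<in> {1..n} \<Longrightarrow> coord j c \<in> W \<Longrightarrow> coord j (q * c) \<in> W"
proof -
  assume j: "j \<in> {1..n}" and c: "coord j c \<in> W"
  have "- burau_T q j (coord j c) = coord j (q * c)"
    using j by (intro ext) (auto simp: burau_T_def coord_def)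
  then show ?thesis using closed_neg[OF closed_T[OF j c]] by simp
qed

lemma coord_up: "j \<ge> 1 \<Longrightarrow> j + 1 \<le> n \<Longrightarrow> coord j c \<in> W \<Longrightarrow> coord (j + 1) (q * c) \<in> W"
proof -
  assume "j \<ge> 1" "j + 1 \<le> n" and c: "coord j c \<in> W"
  then have j: "j + 1 \<in> {1..n}" by auto
  have "burau_T q (j + 1) (coord j c) - coord j c = coord (j + 1) (q * c)"
    by (intro ext) (auto simp: burau_T_def coord_def)
  then show ?thesis using closed_diff[OF closed_T[OF j c] c] by simp
qed

lemma coord_down: "j \<ge> 2 \<Longrightarrow> j \<le> n \<Longrightarrow> coord j c \<in> W \<Longrightarrow> coord (j - 1) c \<in> W"
proof -
  assume "j \<ge> 2" "j \<le> n" and c: "coord j c \<in> W"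
  then have j: "j - 1 \<in> {1..n}" by auto
  have "burau_T q (j - 1) (coord j c) - coord j c = coord (j - 1) c"
    using \<open>j \<ge> 2\<close> by (intro ext) (auto simp: burau_T_def coord_def)
  then show ?thesis using closed_diff[OF closed_T[OF j c] c] by simp
qed

lemma coord_mult_q_pow: "j \<in> {1..n} \<Longrightarrow> coord j c \<in> W \<Longrightarrow> coord j (q ^ i * c) \<in> W"
proof (induction i)
  case (Suc i)
  then have "coord j (q * (q ^ i * c)) \<in> W" by (intro coord_mult_q) auto
  then show ?case by (simp add: mult.assoc)
qed simp

text \<open>If q has finite order, a coordinate vector c e_j in W can be moved to every coordinate:
  downwards directly, upwards at the cost of a factor q, undone by q^(D-1).\<close>

lemma coord_spread:
  assumes qD: "q ^ D = 1" and D0: "D > 0" and j: "j \<in> {1..n}" and c: "coord j c \<in> W"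
  shows "k \<in> {1..n} \<Longrightarrow> coord k c \<in> W"
proof -
  have "q ^ (D - 1) * (q * c) = q ^ Suc (D - 1) * c" by (simp add: mult.assoc mult.commute)
  then have q_inv: "q ^ (D - 1) * (q * c) = c" using qD D0 by simp
  have up: "j + i \<le> n \<Longrightarrow> coord (j + i) c \<in> W" for i
  proof (induction i)
    case (Suc i)
    then have "coord (j + i + 1) (q * c) \<in> W" using j by (intro coord_up) auto
    then have "coord (j + i + 1) (q ^ (D - 1) * (q * c)) \<in> W" using Suc.prems
      by (intro coord_mult_q_pow) auto
    then have "coord (j + i + 1) c \<in> W" by (simp only: q_inv)
    then show ?case by simp
  qed (use c in simp)
  have down: "i < j \<Longrightarrow> coord (j - i) c \<in> W" for i
  proof (induction i)
    case (Suc i)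
    then have "coord (j - i - 1) c \<in> W" using j by (intro coord_down) auto
    then show ?case by simp
  qed (use c in simp)
  assume k: "k \<in> {1..n}"
  show "coord k c \<in> W"
  proof (cases "j \<le> k")
    case True then show ?thesis using up[of "k - j"] k by simp
  next
    case False then show ?thesis using down[of "j - k"] k by simp
  qed
qed

lemma coord_sum:
  assumes zero: "0 \<in> W" and v: "v \<in> vecs n" and pieces: "\<And>k. k \<in> {1..n} \<Longrightarrow> coord k (v k) \<in> W"
  shows "v \<in> W"
proof -
  have partial: "m \<le> n \<Longrightarrow> (\<lambda>k. if 1 \<le> k \<and> k \<le> m then v k else 0) \<in> W" for m
  proof (induction m)
    case 0
    have "(\<lambda>k::nat. if 1 \<le> k \<and> k \<le> 0 then v k else 0) = 0" by (rule ext) auto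
    then show ?case using zero by simp
  next
    case (Suc m)
    have "(\<lambda>k. if 1 \<le> k \<and> k \<le> Suc m then v k else 0)
        = (\<lambda>k. if 1 \<le> k \<and> k \<le> m then v k else 0) + coord (Suc m) (v (Suc m))"
      by (rule ext) (auto simp: coord_def)
    then show ?case using closed_add[OF Suc.IH pieces[of "Suc m"]] Suc.prems by simp
  qed
  have "(\<lambda>k. if 1 \<le> k \<and> k \<le> n then v k else 0) = v"
    using v unfolding vecs_def by (intro ext) auto
  then show ?thesis using partial[of n] by simp
qed

text \<open>Either
  some T_j moves the vector, producing a non-zero defect in coordinate j, or the vector is
  fixed by all T_j and hence zero.\<close>

lemma closed_contains_coord_line:
  assumes qD: "q ^ D = 1" "D > 0"
    and cancel: "\<And>x. (q ^ Suc n - 1) * x = 0 \<Longrightarrow> x = 0"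
    and w: "w \<in> W" "w \<in> vecs n" "w \<noteq> 0"
  shows "\<exists>c. c \<noteq> 0 \<and> (\<forall>k\<in>{1..n}. coord k c \<in> W)"
proof -
  have "\<exists>j\<in>{1..n}. burau_defect q w j \<noteq> 0"
  proof (rule ccontr)
    assume "\<not> (\<exists>j\<in>{1..n}. burau_defect q w j \<noteq> 0)"
    then have "w = 0" using burau_fixed_vector[OF w(2) _ cancel] by blast
    then show False using w(3) by simp
  qed
  then obtain j where j: "j \<in> {1..n}" "burau_defect q w j \<noteq> 0" by blast
  have "coord j (burau_defect q w j) \<in> W" by (rule coord_defect[OF w(1) j(1)])
  then have "\<forall>k\<in>{1..n}. coord k (burau_defect q w j) \<in> W"
    using coord_spread[OF qD j(1)] by blast
  then show ?thesis using j(2) by blast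
qed

end

lemma finite_cosets:
  fixes W :: "(nat \<Rightarrow> 'a::comm_ring) set"
  assumes W: "add_subgroup n W" and R: "finite R" "\<forall>x. \<exists>r\<in>R. \<exists>b. x = r + m * b"
    and mW: "\<forall>v\<in>vecs n. (\<lambda>k. m * v k) \<in> W"
  shows "finite {(+) v ` W | v. v \<in> vecs n}"
proof -
  have "\<forall>x. \<exists>rb. fst rb \<in> R \<and> x = fst rb + m * snd rb" using R(2) by fastforce
  then obtain rep where rep: "\<And>x. fst (rep x) \<in> R \<and> x = fst (rep x) + m * snd (rep x)"
    by metis
  define VR where "VR = (\<lambda>\<phi>. \<lambda>k. if k \<in> {1..n} then \<phi> k else 0) ` PiE {1..n} (\<lambda>_. R)"
  have "finite VR" unfolding VR_def using R(1) by (intro finite_imageI finite_PiE) auto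
  have add: "\<forall>v\<in>W. \<forall>w\<in>W. v + w \<in> W" and neg: "\<forall>v\<in>W. - v \<in> W"
    using W unfolding add_subgroup_def by auto
  have shift: "(+) (r + x) ` W = (+) r ` W" if "x \<in> W" for r x
  proof (intro equalityI subsetI)
    fix y assume "y \<in> (+) (r + x) ` W"
    then obtain w where "w \<in> W" "y = r + (x + w)" by (auto simp: add.assoc)
    then show "y \<in> (+) r ` W" using add \<open>x \<in> W\<close> by blast
  next
    fix y assume "y \<in> (+) r ` W"
    then obtain w where w: "w \<in> W" "y = (r + x) + (- x + w)" by (auto simp: algebra_simps)
    moreover have "- x + w \<in> W" using add neg \<open>x \<in> W\<close> w(1) by blast
    ultimately show "y \<in> (+) (r + x) ` W" by blast
  qed
  have "{(+) v ` W | v. v \<in> vecs n} \<subseteq> (\<lambda>r. (+) r ` W) ` VR"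
  proof
    fix C assume "C \<in> {(+) v ` W | v. v \<in> vecs n}"
    then obtain v where v: "v \<in> vecs n" "C = (+) v ` W" by blast
    define rv where "rv = (\<lambda>k. if k \<in> {1..n} then fst (rep (v k)) else 0)"
    define bv where "bv = (\<lambda>k. if k \<in> {1..n} then snd (rep (v k)) else 0)"
    have "bv \<in> vecs n" unfolding vecs_def bv_def by auto
    then have "(\<lambda>k. m * bv k) \<in> W" using mW by blast
    moreover have "v = rv + (\<lambda>k. m * bv k)"
      using v(1) rep unfolding vecs_def rv_def bv_def by (intro ext) auto
    ultimately have "C = (+) rv ` W" unfolding v(2) using shift by metis
    moreover have "rv \<in> VR" unfolding VR_def rv_def
      by (rule image_eqI[of _ _ "restrict (\<lambda>k. fst (rep (v k))) {1..n}"]) (auto simp: rep)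
    ultimately show "C \<in> (\<lambda>r. (+) r ` W) ` VR" by blast
  qed
  then show ?thesis using \<open>finite VR\<close> by (rule finite_subset[OF _ finite_imageI])
qed


text \<open>Over A, a closed set containing c e_k contains c x e_k for all x in A: these x form a set
  containing 1 and closed under addition, negation and multiplication by q.\<close>

lemma closed_coord_multiples:
  fixes W :: "(nat \<Rightarrow> 'd cyc) set"
  assumes closed: "burau_closed n cyc_q W" and k: "k \<in> {1..n}" and c: "coord k c \<in> W"
  shows "coord k (c * x) \<in> W"
proof -
  have "x \<in> {x. coord k (c * x) \<in> W}"
  proof (rule cyc_generated_by_q)
    show "1 \<in> {x. coord k (c * x) \<in> W}" using c by simp
    show "x + y \<in> {x. coord k (c * x) \<in> W}" if "x \<in> {x. coord k (c * x) \<in> W}"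
      "y \<in> {x. coord k (c * x) \<in> W}" for x y
      using that closed_add[OF closed] by (simp add: distrib_left coord_add)
    show "- x \<in> {x. coord k (c * x) \<in> W}" if "x \<in> {x. coord k (c * x) \<in> W}" for x
      using that closed_neg[OF closed] by (simp add: coord_uminus)
    show "cyc_q * x \<in> {x. coord k (c * x) \<in> W}" if "x \<in> {x. coord k (c * x) \<in> W}" for x
      using that coord_mult_q[OF closed k] by (simp add: mult.left_commute)
  qed
  then show ?thesis by simp
qed

text \<open>Part (a): a non-zero additive subgroup of A^n stable under the Burau image contains
  c * A^n for some c ~= 0, and therefore has finite index: c divides a positive integer N,
  so W contains N * A^n, and A/NA is finite.\<close>

lemma stable_subgroup_contains_multiple:
  fixes W :: "(nat \<Rightarrow> 'd cyc) set"
  assumes d0: "CARD('d) > 0" and nd: "\<not> CARD('d) dvd Suc n"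
    and W: "add_subgroup n W" "W \<noteq> {0}" "stable (burau_image cyc_q n) W"
  shows "(\<exists>c::'d cyc. c \<noteq> 0 \<and> {(\<lambda>k. c * v k) | v. v \<in> vecs n} \<subseteq> W)
          \<and> finite {(+) v ` W | v. v \<in> vecs n}"
proof -
  have sub: "W \<subseteq> vecs n" and zero: "0 \<in> W" and add: "\<forall>v\<in>W. \<forall>w\<in>W. v + w \<in> W"
    and neg: "\<forall>v\<in>W. - v \<in> W" using W(1) unfolding add_subgroup_def by auto
  have closed: "burau_closed n cyc_q W"
    unfolding burau_closed_def using add neg stable_burau_T[OF W(3)] by blast
  obtain w where w: "w \<in> W" "w \<noteq> 0" using W(2) zero by blast
  then have wv: "w \<in> vecs n" using sub by blast
  have qD: "(cyc_q :: 'd cyc) ^ CARD('d) = 1" using cyc_q_pow_eq_1_iff[OF d0] by simp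
  have "\<exists>c. c \<noteq> 0 \<and> (\<forall>k\<in>{1..n}. coord k c \<in> W)"
    using closed_contains_coord_line[OF closed qD d0 _ w(1) wv w(2)]
      cyc_q_pow_minus_1_cancel[OF d0 nd] by blast
  then obtain c :: "'d cyc" where c: "c \<noteq> 0" "\<forall>k\<in>{1..n}. coord k c \<in> W" by blast
  have multiple: "(\<lambda>k. c * v k) \<in> W" if v: "v \<in> vecs n" for v
  proof (rule coord_sum[OF closed zero])
    show "(\<lambda>k. c * v k) \<in> vecs n" using v unfolding vecs_def by simp
    show "coord k (c * v k) \<in> W" if "k \<in> {1..n}" for k
      using closed_coord_multiples[OF closed that] c(2) that by blast
  qed
  obtain N u where N: "N > 0" "abs_cyc [:N:] = c * u"
    using cyc_nonzero_divides_int[OF d0 c(1)] by blast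
  have NW: "\<forall>v\<in>vecs n. (\<lambda>k. abs_cyc [:N:] * v k) \<in> W"
  proof
    fix v :: "nat \<Rightarrow> 'd cyc" assume "v \<in> vecs n"
    then have "(\<lambda>k. c * (u * v k)) \<in> W" by (intro multiple) (simp add: vecs_def)
    then show "(\<lambda>k. abs_cyc [:N:] * v k) \<in> W" unfolding N(2) by (simp add: mult.assoc)
  qed
  obtain R where R: "finite R" "\<forall>x::'d cyc. \<exists>r\<in>R. \<exists>b. x = r + abs_cyc [:N:] * b"
    using cyc_finite_residues[OF d0 N(1)] by blast
  have "finite {(+) v ` W | v. v \<in> vecs n}" by (rule finite_cosets[OF W(1) R NW])
  moreover have "{(\<lambda>k. c * v k) | v. v \<in> vecs n} \<subseteq> W" using multiple by blast
  ultimately show ?thesis using c(1) by blast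
qed

text \<open>Here q^(n+1) ~= 1 in F because the embedding is injective, so the central step applies, and
  c e_k in W for c ~= 0 gives every basis vector.\<close>

lemma stable_subspace_full:
  fixes \<iota> :: "'d cyc \<Rightarrow> 'f::field" and W :: "(nat \<Rightarrow> 'f) set"
  assumes d0: "CARD('d) > 0" and nd: "\<not> CARD('d) dvd Suc n"
    and \<iota>: "inj \<iota>" "\<iota> 1 = 1" "\<forall>a b. \<iota> (a * b) = \<iota> a * \<iota> b"
    and W: "subspace_vecs n W" "W \<noteq> {0}" "stable (burau_image (\<iota> cyc_q) n) W"
  shows "W = vecs n"
proof -
  define Q where "Q = \<iota> cyc_q"
  have sub: "W \<subseteq> vecs n" and zero: "0 \<in> W" and add: "\<forall>v\<in>W. \<forall>w\<in>W. v + w \<in> W"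
    and scale: "\<forall>a. \<forall>v\<in>W. (\<lambda>k. a * v k) \<in> W" using W(1) unfolding subspace_vecs_def by auto
  have neg: "\<forall>v\<in>W. - v \<in> W"
  proof
    fix v assume "v \<in> W"
    then have "(\<lambda>k. (-1) * v k) \<in> W" using scale by blast
    moreover have "(\<lambda>k. (-1) * v k) = - v" by (rule ext) simp
    ultimately show "- v \<in> W" by simp
  qed
  have closed: "burau_closed n Q W"
    unfolding burau_closed_def Q_def using add neg stable_burau_T[OF W(3)] by blast
  have \<iota>_pow: "\<iota> (x ^ m) = \<iota> x ^ m" for x m
    by (induction m) (simp_all add: \<iota>(2,3))
  have "(cyc_q :: 'd cyc) ^ CARD('d) = 1" by (simp add: cyc_q_pow_eq_1_iff[OF d0])
  then have QD: "Q ^ CARD('d) = 1" unfolding Q_def \<iota>_pow[symmetric] using \<iota>(2) by simp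
  have "(cyc_q :: 'd cyc) ^ Suc n \<noteq> 1" using cyc_q_pow_eq_1_iff[OF d0] nd by blast
  then have "Q ^ Suc n \<noteq> 1"
    unfolding Q_def \<iota>_pow[symmetric] \<iota>(2)[symmetric] using inj_eq[OF \<iota>(1)] by simp
  then have cancel: "x = 0" if "(Q ^ Suc n - 1) * x = 0" for x using that by simp
  obtain w where w: "w \<in> W" "w \<noteq> 0" using W(2) zero by blast
  then have wv: "w \<in> vecs n" using sub by blast
  have "\<exists>c. c \<noteq> 0 \<and> (\<forall>k\<in>{1..n}. coord k c \<in> W)"
    by (rule closed_contains_coord_line[OF closed QD d0 cancel w(1) wv w(2)])
  then obtain c where c: "c \<noteq> 0" "\<forall>k\<in>{1..n}. coord k c \<in> W" by blast
  have "v \<in> W" if v: "v \<in> vecs n" for v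
  proof (rule coord_sum[OF closed zero v])
    fix k assume "k \<in> {1..n}"
    then have "(\<lambda>i. (v k / c) * coord k c i) \<in> W" using scale c(2) by blast
    moreover have "(\<lambda>i. (v k / c) * coord k c i) = coord k (v k)"
      using c(1) by (intro ext) (simp add: coord_def)
    ultimately show "coord k (v k) \<in> W" by simp
  qed
  then show ?thesis using sub by blast
qed

text \<open>The theorem.  The hypothesis d >= 3 enters only through d > 0; the congruence condition
  says exactly that d does not divide n + 1, i.e. q^(n+1) ~= 1.\<close>

theorem lemma4p3:
  fixes n :: nat
  assumes d3: "CARD('d) \<ge> 3"
    and n_cong: "\<not> [int n = -1] (mod int CARD('d))"
  shows
    "(\<forall>W :: (nat \<Rightarrow> 'd cyc) set.
        add_subgroup n W \<and> W \<noteq> {0} \<and> stable (burau_image cyc_q n) W \<longrightarrow>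
          (\<exists>c::'d cyc. c \<noteq> 0 \<and> {(\<lambda>k. c * v k) | v. v \<in> vecs n} \<subseteq> W)
          \<and> finite {(+) v ` W | v. v \<in> vecs n})
     \<and>
     (\<forall>(\<iota> :: 'd cyc \<Rightarrow> 'f::field) (W :: (nat \<Rightarrow> 'f) set).
        inj \<iota> \<and> \<iota> 1 = 1 \<and> (\<forall>a b. \<iota> (a + b) = \<iota> a + \<iota> b) \<and> (\<forall>a b. \<iota> (a * b) = \<iota> a * \<iota> b) \<and>
        subspace_vecs n W \<and> W \<noteq> {0} \<and> stable (burau_image (\<iota> cyc_q) n) W \<longrightarrow>
          W = vecs n)"
proof -
  have d0: "CARD('d) > 0" using d3 by simp
  have nd: "\<not> CARD('d) dvd Suc n"
  proof
    assume "CARD('d) dvd Suc n"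
    then have "int CARD('d) dvd int (Suc n)" by (simp only: of_nat_dvd_iff)
    moreover have "int (Suc n) = int n - (-1)" by simp
    ultimately have "int CARD('d) dvd int n - (-1)" by (simp only:)
    then show False using n_cong by (simp add: cong_iff_dvd_diff)
  qed
  show ?thesis
  proof ((rule conjI; intro allI impI), goal_cases)
    case (1 W)
    then show ?case using stable_subgroup_contains_multiple[OF d0 nd, of W] by blast
  next
    case (2 \<iota> W)
    then show ?case using stable_subspace_full[OF d0 nd, of \<iota> W] by blast
  qed
qed

end
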